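(* Let $M\in\mathbb{R}^{p\times q}_+$ with $\operatorname{rank}(M)=\binom{k+1}{2}$ and $\operatorname{rank}_{\mathrm{psd}}(M)=k$. Fix a rank factorization $M=UV$ with $U\in\mathbb{R}^{p\times d}$, $V\in\mathbb{R}^{d\times q}$, $d=\binom{k+1}{2}$; let $u_i\in\mathbb{R}^d$ be the $i$-th row of $U$ (as a vector) and $v_j\in\mathbb{R}^d$ the $j$-th column of $V$. Let $P=\operatorname{cone}(u_1,\dots,u_p)$ and $Q=\{x\in\mathbb{R}^d: v_j^Tx\ge0\ \text{for all } j\}$. Then $\mathcal{SF}(M)$ is homeomorphic to $\Delta_k(P,Q)$.
   Context: $\mathcal{S}^k$ is the space of real symmetric $k\times k$ matrices, $\mathcal{S}^k_+$ the psd cone, $\langle A,B\rangle=\operatorname{trace}(AB)$. The psd rank of $M$ is the smallest $k$ admitting $A_1,\dots,A_p,B_1,\dots,B_q\in\mathcal{S}^k_+$ with $M_{ij}=\langle A_i,B_j\rangle$. With $k=\operatorname{rank}_{\mathrm{psd}}(M)$, the space of psd factorizations $\mathcal{SF}(M)\subseteq(\mathcal{S}^k)^{p+q}$ is the set of all tuples $(A_1,\dots,A_p,B_1,\dots,B_q)$ of matrices in $\mathcal{S}^k_+$ with $M_{ij}=\langle A_i,B_j\rangle$ for all $i,j$, with the subspace topology. $\Delta_k(P,Q)$ is the set of all linear maps $\pi:\mathcal{S}^k\to\mathbb{R}^{\binom{k+1}{2}}$ with $P\subseteq\pi(\mathcal{S}^k_+)\subseteq Q$, with the subspace topology of the space of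 linear maps. *)

theory Defs
  imports "HOL-Analysis.Analysis"
begin

definition sym_mats :: "(real^'k^'k) set" where
  "sym_mats = {X. transpose X = X}"

definition psd_cone :: "(real^'k^'k) set" where
  "psd_cone = {X. transpose X = X \<and> (\<forall>v. 0 \<le> v \<bullet> (X *v v))}"

definition trace_ip :: "real^'k^'k \<Rightarrow> real^'k^'k \<Rightarrow> real" where
  "trace_ip A B = trace (A ** B)"

text \<open>psd matrices of size k, with size given by a natural number (needed because
  the psd rank quantifies over the size).\<close>
definition psd_n :: "nat \<Rightarrow> (nat \<Rightarrow> nat \<Rightarrow> real) \<Rightarrow> bool" where
  "psd_n k X \<longleftrightarrow> (\<forall>a<k. \<forall>b<k. X a b = X b a) \<and>
     (\<forall>v. 0 \<le> (\<Sum>a<k. \<Sum>b<k. v a * X a b * v b))"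

definition psd_factorizable :: "nat \<Rightarrow> real^'q^'p \<Rightarrow> bool" where
  "psd_factorizable k M \<longleftrightarrow>
     (\<exists>(A :: 'p \<Rightarrow> nat \<Rightarrow> nat \<Rightarrow> real) (B :: 'q \<Rightarrow> nat \<Rightarrow> nat \<Rightarrow> real).
        (\<forall>i. psd_n k (A i)) \<and> (\<forall>j. psd_n k (B j)) \<and>
        (\<forall>i j. M $ i $ j = (\<Sum>a<k. \<Sum>b<k. A i a b * B j b a)))"

definition psd_rank :: "real^'q^'p \<Rightarrow> nat" where
  "psd_rank M = (LEAST k. psd_factorizable k M)"

definition psd_factorizations :: "real^'q^'p \<Rightarrow> (((real^'k^'k)^'p) \<times> ((real^'k^'k)^'q)) set" where
  "psd_factorizations M = {(A, B). (\<forall>i. A $ i \<in> psd_cone) \<and> (\<forall>j. B $ j \<in> psd_cone) \<and>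
        (\<forall>i j. M $ i $ j = trace_ip (A $ i) (B $ j))}"

text \<open>Linear maps S^k \<rightarrow> R^d, represented as bounded linear maps on all k x k matrices
  that are invariant under transposition (i.e. factor through the symmetric part).\<close>
definition Delta :: "(real^'d) set \<Rightarrow> (real^'d) set \<Rightarrow> ((real^'k^'k) \<Rightarrow>\<^sub>L (real^'d)) set" where
  "Delta P Q = {\<pi>. (\<forall>X. blinfun_apply \<pi> (transpose X) = blinfun_apply \<pi> X) \<and>
        P \<subseteq> blinfun_apply \<pi> ` psd_cone \<and> blinfun_apply \<pi> ` psd_cone \<subseteq> Q}"

definition row_cone :: "real^'d^'p \<Rightarrow> (real^'d) set" where
  "row_cone U = {x. \<exists>c::'p \<Rightarrow> real. (\<forall>i. 0 \<le> c i) \<and> x = (\<Sum>i\<in>UNIV. c i *\<^sub>R row i U)}"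

definition col_dual :: "real^'q^'d \<Rightarrow> (real^'d) set" where
  "col_dual V = {x. \<forall>j. 0 \<le> column j V \<bullet> x}"

end

theory Submission
  imports Defs
begin

text \<open>Identify the symmetric \<open>k \<times> k\<close> matrices with \<open>\<real>\<^sup>d\<close>, \<open>d = (k+1 choose 2)\<close>, by a
  linear isomorphism \<open>\<epsilon>\<close>, and let \<open>R\<close> be a right inverse of \<open>V\<close>. A factorization \<open>(A, B)\<close>
  yields \<open>\<pi>\<^sub>B X = \<Sum>\<^sub>j \<langle>B\<^sub>j, X\<rangle> r\<^sub>j\<close> with \<open>r\<^sub>j\<close> the rows of \<open>R\<close>; then \<open>\<pi>\<^sub>B A\<^sub>i = u\<^sub>i\<close>, and since
  \<open>rank M = d\<close> the \<open>A\<^sub>i\<close> span all symmetric matrices, on which \<open>v\<^sub>j\<^sup>T \<pi>\<^sub>B\<close> therefore equals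
  \<open>\<langle>B\<^sub>j, -\<rangle>\<close>. Duality of the psd cone then puts \<open>\<pi>\<^sub>B\<close> into \<open>\<Delta>\<^sub>k(P, Q)\<close>. Conversely, for
  \<open>\<pi> \<in> \<Delta>\<^sub>k(P, Q)\<close> the image of the psd cone contains the full-dimensional cone \<open>P\<close>, so \<open>\<pi> \<circ> \<epsilon>\<close>
  is invertible; \<open>A\<^sub>i = \<epsilon> ((\<pi> \<circ> \<epsilon>)\<^sup>-\<^sup>1 u\<^sub>i)\<close> and \<open>B\<^sub>j\<close> the matrix of \<open>X \<mapsto> v\<^sub>j \<bullet> \<pi> X\<close> invert the
  first map, and Cramer's rule makes the inverse continuous.\<close>

section \<open>The psd cone and the trace inner product\<close>

lemma trace_ip_expand: "trace_ip A B = (\<Sum>a\<in>UNIV. \<Sum>b\<in>UNIV. A$a$b * B$b$a)"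
  by (simp add: trace_ip_def trace_def matrix_matrix_mult_def)

lemma trace_ip_commute: "trace_ip A B = trace_ip B A"
  unfolding trace_ip_expand by (subst sum.swap) (simp add: mult.commute)

lemma linear_trace_ip: "linear (trace_ip A)"
  by (rule linearI) (simp_all add: trace_ip_expand algebra_simps sum.distrib sum_distrib_left)

lemmas trace_ip_add_right = linear_add[OF linear_trace_ip]
  and trace_ip_scaleR_right = linear_scale[OF linear_trace_ip]

lemma sym_mats_entry_commute:
  assumes "A \<in> sym_mats" shows "A$a$b = A$b$a"
proof -
  have "transpose A $ b $ a = A $ b $ a" using assms by (simp add: sym_mats_def)
  then show ?thesis by (simp add: transpose_def)
qed

lemma trace_ip_transpose_right:
  assumes "A \<in> sym_mats" shows "trace_ip A (transpose X) = trace_ip A X"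
  unfolding trace_ip_expand transpose_def
  by (subst sum.swap) (simp add: sym_mats_entry_commute[OF assms] mult.commute)

lemma psd_cone_subset_sym_mats: "psd_cone \<subseteq> sym_mats"
  by (auto simp: psd_cone_def sym_mats_def)

lemma psd_cone_entry_commute: "X \<in> psd_cone \<Longrightarrow> X$a$b = X$b$a"
  using psd_cone_subset_sym_mats sym_mats_entry_commute by blast

lemma psd_cone_quadratic_nonneg: "X \<in> psd_cone \<Longrightarrow> 0 \<le> v \<bullet> (X *v v)"
  by (simp add: psd_cone_def)

lemma quadratic_form_expand: "v \<bullet> (X *v w) = (\<Sum>a\<in>UNIV. \<Sum>b\<in>UNIV. v$a * X$a$b * w$b)"
  by (simp add: inner_vec_def matrix_vector_mult_def sum_distrib_left mult.assoc)

lemma quadratic_form_axis: "axis i 1 \<bullet> (X *v axis j 1) = (X$i$j::real)"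
  by (metis cart_eq_inner_axis inner_commute matrix_vector_mult_basis column_def vec_lambda_beta)

definition outer :: "real^'k \<Rightarrow> real^'k^'k" where
  "outer x = (\<chi> a b. x$a * x$b)"

lemma trace_ip_outer: "trace_ip A (outer x) = x \<bullet> (A *v x)"
  unfolding trace_ip_expand quadratic_form_expand outer_def
  by (simp add: mult.commute mult.left_commute)

lemma quadratic_form_outer: "v \<bullet> (outer x *v v) = (x \<bullet> v)\<^sup>2"
  unfolding quadratic_form_expand outer_def
  by (simp add: inner_vec_def power2_eq_square sum_distrib_left sum_distrib_right
        mult.commute mult.left_commute)

lemma outer_in_psd_cone: "outer x \<in> psd_cone"
proof -
  have "transpose (outer x) = outer x"
    by (simp add: outer_def transpose_def vec_eq_iff mult.commute)
  then show ?thesis unfolding psd_cone_def by (simp add: quadratic_form_outer)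
qed

lemma psd_cone_nonneg_combination:
  fixes A :: "(real^'k^'k)^'p"
  assumes "\<forall>i. A$i \<in> psd_cone" and "\<forall>i. 0 \<le> c i"
  shows "(\<Sum>i\<in>UNIV. c i *\<^sub>R A$i) \<in> psd_cone"
proof -
  have "A$i$a$b = A$i$b$a" for i a b using assms(1) psd_cone_entry_commute by blast
  then have "transpose (\<Sum>i\<in>UNIV. c i *\<^sub>R A$i) = (\<Sum>i\<in>UNIV. c i *\<^sub>R A$i)"
    by (simp add: transpose_def vec_eq_iff)
  moreover have "0 \<le> v \<bullet> ((\<Sum>i\<in>UNIV. c i *\<^sub>R A$i) *v v)" for v
  proof -
    have "v \<bullet> ((\<Sum>i\<in>UNIV. c i *\<^sub>R A$i) *v v) = (\<Sum>i\<in>UNIV. c i * (v \<bullet> (A$i *v v)))"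
      unfolding quadratic_form_expand sum_component sum_distrib_left
      by (subst sum.swap, rule sum.cong[OF refl], subst sum.swap, rule sum.cong[OF refl])
        (simp add: sum_distrib_left algebra_simps)
    also have "\<dots> \<ge> 0"
      using assms by (intro sum_nonneg mult_nonneg_nonneg psd_cone_quadratic_nonneg) auto
    finally show ?thesis by simp
  qed
  ultimately show ?thesis by (simp add: psd_cone_def)
qed

lemmas bilinear_simps = inner_add_left inner_add_right inner_diff_left inner_diff_right
  inner_scaleR_left inner_scaleR_right matrix_vector_right_distrib matrix_vector_mult_diff_distrib
  scaleR_matrix_vector_assoc[symmetric] matrix_vector_mult_add_rdistrib matrix_vector_mult_diff_rdistrib

lemma psd_cone_zero_diagonal:
  assumes X: "X \<in> psd_cone" and "X$c$c = 0"
  shows "X$c$b = 0"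
proof (rule ccontr)
  assume ne: "X$c$b \<noteq> 0"
  define t where "t = - (X$b$b + 1) / (2 * X$c$b)"
  have "(axis b 1 + t *\<^sub>R axis c 1) \<bullet> (X *v (axis b 1 + t *\<^sub>R axis c 1))
      = X$b$b + t * X$b$c + t * X$c$b + t * t * X$c$c"
    by (simp add: bilinear_simps quadratic_form_axis algebra_simps)
  also have "\<dots> = -1"
    using ne assms(2) psd_cone_entry_commute[OF X, of b c] by (simp add: t_def field_simps)
  finally show False using psd_cone_quadratic_nonneg[OF X, of "axis b 1 + t *\<^sub>R axis c 1"] by simp
qed

text \<open>A Gaussian elimination step; the result has row and column \<open>c\<close> equal to zero.\<close>
lemma psd_cone_schur_complement:
  assumes X: "X \<in> psd_cone" and pos: "0 < X$c$c"
  shows "X - (1 / X$c$c) *\<^sub>R outer (column c X) \<in> psd_cone"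
proof -
  define x where "x = column c X"
  have sym: "X$a$b = X$b$a" for a b using psd_cone_entry_commute[OF X] .
  have x: "x$a = X$a$c" for a by (simp add: x_def column_def)
  have left: "axis c 1 \<bullet> (X *v v) = x \<bullet> v" for v
  proof -
    have "axis c 1 \<bullet> (X *v v) = (X *v v)$c" by (simp add: cart_eq_inner_axis inner_commute)
    then show ?thesis by (simp add: matrix_vector_mult_def inner_vec_def x sym mult.commute)
  qed
  have right: "v \<bullet> (X *v axis c 1) = x \<bullet> v" for v
    by (simp add: matrix_vector_mult_basis x_def inner_commute)
  have xc: "x \<bullet> axis c 1 = X$c$c" by (metis cart_eq_inner_axis x)
  have "0 \<le> v \<bullet> ((X - (1 / X$c$c) *\<^sub>R outer x) *v v)" for v
  proof -
    define t where "t = (x \<bullet> v) / X$c$c"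
    have "0 \<le> (v - t *\<^sub>R axis c 1) \<bullet> (X *v (v - t *\<^sub>R axis c 1))"
      by (rule psd_cone_quadratic_nonneg[OF X])
    also have "\<dots> = v \<bullet> (X *v v) - t * (x \<bullet> v) - t * (x \<bullet> v) + t * t * X$c$c"
      using xc by (simp add: bilinear_simps quadratic_form_axis left right algebra_simps)
    also have "\<dots> = v \<bullet> (X *v v) - (1 / X$c$c) * (x \<bullet> v)\<^sup>2"
      using pos by (simp add: t_def field_simps power2_eq_square)
    also have "\<dots> = v \<bullet> ((X - (1 / X$c$c) *\<^sub>R outer x) *v v)"
      by (simp add: bilinear_simps quadratic_form_outer)
    finally show ?thesis .
  qed
  moreover have "transpose (X - (1 / X$c$c) *\<^sub>R outer x) = X - (1 / X$c$c) *\<^sub>R outer x"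
    by (simp add: vec_eq_iff transpose_def sym psd_cone_entry_commute[OF outer_in_psd_cone])
  ultimately show ?thesis by (simp add: psd_cone_def x_def)
qed

text \<open>Each pivot \<open>c\<close> splits off a rank-one psd term and shrinks the support of \<open>X\<close>.\<close>
lemma trace_ip_psd_nonneg_on_support:
  assumes "finite K" and A: "A \<in> psd_cone" and "X \<in> psd_cone"
    and "\<forall>a b. X$a$b \<noteq> 0 \<longrightarrow> a \<in> K \<and> b \<in> K"
  shows "0 \<le> trace_ip A X"
  using assms(1,3,4)
proof (induction K arbitrary: X rule: finite_induct)
  case empty
  then show ?case by (simp add: trace_ip_expand)
next
  case (insert c K X)
  have X: "X \<in> psd_cone" and supp: "\<forall>a b. X$a$b \<noteq> 0 \<longrightarrow> a \<in> insert c K \<and> b \<in> insert c K"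
    using insert.prems by auto
  have sym: "X$a$b = X$b$a" for a b using psd_cone_entry_commute[OF X] .
  consider "X$c$c = 0" | "0 < X$c$c"
    using psd_cone_quadratic_nonneg[OF X, of "axis c 1"] by (force simp: quadratic_form_axis)
  then show ?case
  proof cases
    case 1
    then have "\<forall>a b. X$a$b \<noteq> 0 \<longrightarrow> a \<in> K \<and> b \<in> K"
      using supp sym psd_cone_zero_diagonal[OF X] by (metis insert_iff)
    then show ?thesis using insert.IH X by blast
  next
    case 2
    define Y where "Y = X - (1 / X$c$c) *\<^sub>R outer (column c X)"
    have Y: "Y$a$b = X$a$b - X$a$c * X$b$c / X$c$c" for a b
      by (simp add: Y_def outer_def column_def)
    have Y_supp: "a \<in> K \<and> b \<in> K" if ne: "Y$a$b \<noteq> 0" for a b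
    proof -
      have "a \<noteq> c" "b \<noteq> c" using ne 2 by (auto simp: Y sym)
      moreover have "X$a$b \<noteq> 0 \<or> X$a$c \<noteq> 0" "X$a$b \<noteq> 0 \<or> X$b$c \<noteq> 0"
        using ne by (auto simp: Y)
      ultimately show ?thesis using supp by blast
    qed
    have "0 \<le> trace_ip A Y"
      using insert.IH psd_cone_schur_complement[OF X 2] Y_supp by (simp add: Y_def)
    moreover have "0 \<le> trace_ip A (outer (column c X))"
      using psd_cone_quadratic_nonneg[OF A] by (simp add: trace_ip_outer)
    ultimately have "0 \<le> trace_ip A Y + (1 / X$c$c) * trace_ip A (outer (column c X))"
      using 2 by simp
    also have "\<dots> = trace_ip A (Y + (1 / X$c$c) *\<^sub>R outer (column c X))"
      by (simp add: trace_ip_add_right trace_ip_scaleR_right)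
    also have "\<dots> = trace_ip A X" by (simp add: Y_def)
    finally show ?thesis .
  qed
qed

lemma trace_ip_psd_nonneg: "A \<in> psd_cone \<Longrightarrow> X \<in> psd_cone \<Longrightarrow> 0 \<le> trace_ip A X"
  by (rule trace_ip_psd_nonneg_on_support[of UNIV]) auto

section \<open>Coordinates on matrices and Cramer's rule\<close>

lemma card_subsets_one_or_two:
  "card ({s::'k::finite set. card s = 1} \<union> {s. card s = 2}) = (CARD('k) + 1) choose 2"
proof -
  have disjoint: "{s::'k set. card s = 1} \<inter> {s. card s = 2} = {}" by auto
  have "card {s::'k set. card s = 1} = CARD('k) choose 1"
    using n_subsets[of "UNIV::'k set" 1] by simp
  moreover have "card {s::'k set. card s = 2} = CARD('k) choose 2"
    using n_subsets[of "UNIV::'k set" 2] by simp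
  ultimately have "card ({s::'k set. card s = 1} \<union> {s. card s = 2}) = (CARD('k) choose 1) + (CARD('k) choose 2)"
    using card_Un_disjoint[OF _ _ disjoint] by simp
  also have "\<dots> = Suc (CARD('k)) choose Suc 1"
    by (simp only: binomial_Suc_Suc One_nat_def numeral_2_eq_2)
  finally show ?thesis by (simp add: numeral_2_eq_2)
qed

text \<open>Coordinates of a symmetric matrix are indexed by the sets \<open>{a, b}\<close> of indices.\<close>
lemma sym_mats_linear_parametrization:
  assumes "CARD('d) = (CARD('k) + 1) choose 2"
  obtains \<epsilon> :: "real^'d \<Rightarrow> real^'k^'k" where "linear \<epsilon>" "range \<epsilon> = sym_mats"
proof -
  define I where "I = {s::'k set. card s = 1} \<union> {s. card s = 2}"
  have "card (UNIV::'d set) = card I"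
    using assms card_subsets_one_or_two[where 'k='k] unfolding I_def by simp
  then obtain h where h: "bij_betw h (UNIV::'d set) I"
    using finite_same_card_bij[of "UNIV::'d set" I] by auto
  have pair_in_I: "{a, b} \<in> I" for a b :: 'k
    by (cases "a = b") (auto simp: I_def)
  have I_pair: "\<exists>a b. s = {a, b}" if "s \<in> I" for s
  proof -
    have "card s = 1 \<or> card s = 2" using that unfolding I_def by auto
    then show ?thesis
    proof
      assume "card s = 1"
      then obtain a where "s = {a}" using card_1_singletonE by blast
      then show ?thesis by auto
    qed (auto simp: card_2_iff)
  qed
  define rep where "rep s = (SOME p. s = {fst p, snd p})" for s :: "'k set"
  have rep: "s = {fst (rep s), snd (rep s)}" if "s \<in> I" for s
    unfolding rep_def using I_pair[OF that] by (metis (mono_tags, lifting) fst_conv snd_conv someI)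
  have h_eq: "h i = h j \<longleftrightarrow> i = j" for i j using h by (auto simp: bij_betw_def inj_on_def)
  have h_onto: "\<exists>i. h i = s" if "s \<in> I" for s using h that by (auto simp: bij_betw_def)
  define \<epsilon> where "\<epsilon> y = (\<chi> a b. \<Sum>i\<in>UNIV. if h i = {a, b} then y$i else 0)" for y :: "real^'d"
  define e where "e X = (\<chi> i. X $ fst (rep (h i)) $ snd (rep (h i)))" for X :: "real^'k^'k"
  have "linear \<epsilon>"
    by (rule linearI)
      (auto simp: \<epsilon>_def vec_eq_iff sum.distrib[symmetric] sum_distrib_left intro!: sum.cong)
  moreover have "\<epsilon> (e X) = X" if X: "X \<in> sym_mats" for X
  proof -
    have "\<epsilon> (e X) $ a $ b = X $ a $ b" for a b
    proof -
      obtain i where i: "h i = {a, b}" using h_onto pair_in_I by blast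
      have "\<epsilon> (e X) $ a $ b = X $ fst (rep {a, b}) $ snd (rep {a, b})"
        by (simp add: \<epsilon>_def e_def i[symmetric] h_eq)
      also have "\<dots> = X $ a $ b"
        using rep[OF pair_in_I[of a b]] sym_mats_entry_commute[OF X] by (auto simp: doubleton_eq_iff)
      finally show ?thesis .
    qed
    then show ?thesis by (simp add: vec_eq_iff)
  qed
  then have "sym_mats \<subseteq> range \<epsilon>" by (metis rangeI subsetI)
  moreover have "range \<epsilon> \<subseteq> sym_mats"
    by (auto simp: sym_mats_def \<epsilon>_def transpose_def vec_eq_iff insert_commute)
  ultimately show ?thesis using that by blast
qed

definition matrix_unit :: "'k \<Rightarrow> 'k \<Rightarrow> real^'k^'k" where
  "matrix_unit a b = (\<chi> x y. if x = a \<and> y = b then 1 else 0)"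

lemma matrix_unit_expansion: "X = (\<Sum>a\<in>UNIV. \<Sum>b\<in>UNIV. X$a$b *\<^sub>R matrix_unit a b)"
proof -
  have "(\<Sum>a\<in>UNIV. \<Sum>b\<in>UNIV. X$a$b *\<^sub>R matrix_unit a b)$i$j = X$i$j" for i j
  proof -
    have "(\<Sum>b\<in>UNIV. (X$a$b *\<^sub>R matrix_unit a b)$i$j) = (if a = i then X$i$j else 0)" for a
      by (auto simp: matrix_unit_def if_distrib[of "\<lambda>t. _ * t"] sum.delta cong: if_cong)
    then show ?thesis by (simp add: sum_component)
  qed
  then show ?thesis by (simp add: vec_eq_iff)
qed

lemma transpose_matrix_unit: "transpose (matrix_unit a b) = matrix_unit b a"
  by (auto simp: transpose_def matrix_unit_def vec_eq_iff)

lemma trace_ip_matrix_unit: "trace_ip A (matrix_unit b a) = A$a$b"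
proof -
  have "(\<Sum>y\<in>UNIV. A$x$y * matrix_unit b a$y$x) = (if x = a then A$a$b else 0)" for x
    by (cases "x = a") (simp_all add: matrix_unit_def if_distrib[of "\<lambda>t. _ * t"] cong: if_cong)
  then show ?thesis by (simp add: trace_ip_expand)
qed

definition adjoint_matrix :: "((real^'k^'k) \<Rightarrow>\<^sub>L 'b::real_inner) \<Rightarrow> 'b \<Rightarrow> real^'k^'k" where
  "adjoint_matrix \<pi> w = (\<chi> a b. w \<bullet> blinfun_apply \<pi> (matrix_unit b a))"

lemma trace_ip_adjoint_matrix: "trace_ip (adjoint_matrix \<pi> w) X = w \<bullet> blinfun_apply \<pi> X"
proof -
  have "w \<bullet> blinfun_apply \<pi> X = (\<Sum>a\<in>UNIV. \<Sum>b\<in>UNIV. X$a$b * (w \<bullet> blinfun_apply \<pi> (matrix_unit a b)))"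
    by (subst matrix_unit_expansion)
      (simp add: blinfun.sum_right blinfun.scaleR_right inner_sum_right)
  then show ?thesis
    unfolding trace_ip_expand adjoint_matrix_def by (subst sum.swap) (simp add: mult.commute)
qed

lemma adjoint_matrix_in_psd_cone:
  assumes "\<And>X. blinfun_apply \<pi> (transpose X) = blinfun_apply \<pi> X"
    and "\<And>v. 0 \<le> w \<bullet> blinfun_apply \<pi> (outer v)"
  shows "adjoint_matrix \<pi> w \<in> psd_cone"
proof -
  have "blinfun_apply \<pi> (matrix_unit a b) = blinfun_apply \<pi> (matrix_unit b a)" for a b
    using assms(1)[of "matrix_unit a b"] by (simp add: transpose_matrix_unit)
  then have "transpose (adjoint_matrix \<pi> w) = adjoint_matrix \<pi> w"
    by (simp add: adjoint_matrix_def transpose_def vec_eq_iff)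
  moreover have "v \<bullet> (adjoint_matrix \<pi> w *v v) = w \<bullet> blinfun_apply \<pi> (outer v)" for v
    by (simp flip: trace_ip_outer add: trace_ip_adjoint_matrix)
  ultimately show ?thesis using assms(2) by (simp add: psd_cone_def)
qed

definition cramer_solution :: "real^'n^'n \<Rightarrow> real^'n \<Rightarrow> real^'n" where
  "cramer_solution A b = (\<chi> k. det (\<chi> i j. if j = k then b$i else A$i$j) / det A)"

lemma cramer_solution_iff: "det A \<noteq> 0 \<Longrightarrow> A *v x = b \<longleftrightarrow> x = cramer_solution A b"
  unfolding cramer_solution_def by (rule cramer)

lemma continuous_on_det:
  assumes "\<And>i j. continuous_on S (\<lambda>x. F x $ i $ j)"
  shows "continuous_on S (\<lambda>x. det (F x :: real^'n^'n))"
  unfolding det_def by (intro continuous_intros assms)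

lemma continuous_on_cramer_solution:
  assumes "\<And>i j. continuous_on S (\<lambda>x. F x $ i $ j)" and "\<And>i. continuous_on S (\<lambda>x. b x $ i)"
    and "\<And>x. x \<in> S \<Longrightarrow> det (F x) \<noteq> 0"
  shows "continuous_on S (\<lambda>x. cramer_solution (F x) (b x))"
proof -
  have "continuous_on S (\<lambda>x. (\<chi> i j. if j = k then b x $ i else F x $ i $ j) $ i $ j)" for k i j
    by (cases "j = k") (simp_all add: assms)
  then show ?thesis unfolding cramer_solution_def
    by (auto intro!: continuous_on_vec_lambda continuous_on_divide continuous_on_det assms)
qed

lemma row_matrix_mult: "row i (X ** Y) = (\<Sum>j\<in>UNIV. X$i$j *\<^sub>R row j (Y::real^'c^'b))"
  by (simp add: vec_eq_iff row_def matrix_matrix_mult_def mult.commute)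

lemma matrix_mult_entry: "(X ** Y)$i$j = row i X \<bullet> column j (Y::real^'c^'b)"
  by (simp add: matrix_matrix_mult_def inner_vec_def row_def column_def)

lemma right_inverse_expansion:
  fixes V :: "real^'q^'d" and R :: "real^'d^'q"
  assumes "V ** R = mat 1"
  shows "(\<Sum>j\<in>UNIV. (column j V \<bullet> y) *\<^sub>R row j R) = y"
proof -
  have "(\<Sum>j\<in>UNIV. (column j V \<bullet> y) *\<^sub>R row j R) = y v* (V ** R)"
    by (simp add: vec_eq_iff vector_matrix_mult_def matrix_matrix_mult_def inner_vec_def column_def
        row_def sum_component sum_distrib_left sum_distrib_right mult_ac)
      (subst sum.swap, simp)
  then show ?thesis by (simp add: assms)
qed

section \<open>Factorizations versus maps\<close>

lemma rank_factors_of_full_rank_product: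
  fixes U :: "real^'d^'p" and V :: "real^'q^'d"
  assumes "rank (U ** V) = CARD('d)"
  shows "rank U = CARD('d)" and "rank V = CARD('d)"
  using rank_mul_le_left[of U V] rank_mul_le_right[of U V] rank_bound[of U] rank_bound[of V] assms
  by (simp_all add: min_def split: if_splits)

lemma row_in_row_cone: "row i U \<in> row_cone U"
proof -
  have "row i U = (\<Sum>i'\<in>UNIV. (if i' = i then 1 else 0) *\<^sub>R row i' U)"
    by (simp add: if_distrib[of "\<lambda>c. c *\<^sub>R x" for x] cong: if_cong)
  then show ?thesis
    unfolding row_cone_def by (intro CollectI exI[of _ "\<lambda>i'. if i' = i then 1 else 0"]) auto
qed

locale psd_factorization_setup =
  fixes U :: "real^'d^'p" and V :: "real^'q^'d" and R :: "real^'d^'q"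
    and \<epsilon> :: "real^'d \<Rightarrow> real^'k^'k"
  assumes rank_UV: "rank (U ** V) = CARD('d)"
    and right_inverse: "V ** R = mat 1"
    and linear_\<epsilon>: "linear \<epsilon>" and range_\<epsilon>: "range \<epsilon> = sym_mats"
begin

abbreviation factorizations :: "(((real^'k^'k)^'p) \<times> ((real^'k^'k)^'q)) set" where
  "factorizations \<equiv> psd_factorizations (U ** V)"

abbreviation delta_maps :: "((real^'k^'k) \<Rightarrow>\<^sub>L (real^'d)) set" where
  "delta_maps \<equiv> Delta (row_cone U) (col_dual V)"

lemma span_rows_U: "span (rows U) = UNIV"
  using rank_factors_of_full_rank_product(1)[OF rank_UV] dim_eq_full[of "rows U"]
  by (simp add: row_rank_def)

definition factor_map :: "(real^'k^'k)^'q \<Rightarrow> (real^'k^'k) \<Rightarrow>\<^sub>L (real^'d)" where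
  "factor_map B = Blinfun (\<lambda>X. \<Sum>j\<in>UNIV. trace_ip (B$j) X *\<^sub>R row j R)"

lemma factor_map_apply: "blinfun_apply (factor_map B) X = (\<Sum>j\<in>UNIV. trace_ip (B$j) X *\<^sub>R row j R)"
proof -
  have "linear (\<lambda>X. \<Sum>j\<in>UNIV. trace_ip (B$j) X *\<^sub>R row j R)"
    by (rule linearI) (simp_all add: trace_ip_add_right trace_ip_scaleR_right scaleR_add_left
        sum.distrib scaleR_sum_right)
  then show ?thesis
    by (simp add: factor_map_def linear_conv_bounded_linear bounded_linear_Blinfun_apply)
qed

lemma factor_map_transpose:
  assumes "\<forall>j. B$j \<in> psd_cone"
  shows "blinfun_apply (factor_map B) (transpose X) = blinfun_apply (factor_map B) X"
proof -
  have "B$j \<in> sym_mats" for j using assms psd_cone_subset_sym_mats by blast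
  then show ?thesis by (simp add: factor_map_apply trace_ip_transpose_right)
qed

lemma factor_map_left_factor:
  assumes "(A, B) \<in> factorizations"
  shows "blinfun_apply (factor_map B) (A$i) = row i U"
proof -
  have "blinfun_apply (factor_map B) (A$i) = (\<Sum>j\<in>UNIV. (U ** V)$i$j *\<^sub>R row j R)"
    using assms by (simp add: psd_factorizations_def factor_map_apply trace_ip_commute[of "B$_"])
  also have "\<dots> = row i U"
    by (simp add: row_matrix_mult[symmetric] matrix_mul_assoc[symmetric] right_inverse)
  finally show ?thesis .
qed

text \<open>The left factors span all symmetric matrices because the rows of \<open>U ** V\<close>, which are
  their images under a linear map, span a space of dimension \<open>CARD('d) = dim sym_mats\<close>.\<close>
lemma span_left_factors:
  assumes "(A, B) \<in> factorizations"
  shows "span (range (($) A)) = sym_mats"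
proof -
  have sub: "range (($) A) \<subseteq> sym_mats"
    using assms psd_cone_subset_sym_mats by (auto simp: psd_factorizations_def)
  have dim_sym: "dim (sym_mats :: (real^'k^'k) set) \<le> CARD('d)"
    using dim_image_le[OF linear_\<epsilon>, of UNIV] by (simp add: range_\<epsilon>)
  define \<Phi> where "\<Phi> X = (\<chi> j. trace_ip X (B$j))" for X :: "real^'k^'k"
  have "linear \<Phi>"
    unfolding \<Phi>_def trace_ip_commute[of _ "B$_"]
    by (rule linearI) (simp_all add: vec_eq_iff trace_ip_add_right trace_ip_scaleR_right)
  moreover have "row i (U ** V) = \<Phi> (A$i)" for i
    using assms by (simp add: row_def \<Phi>_def psd_factorizations_def vec_eq_iff)
  then have "rows (U ** V) = \<Phi> ` range (($) A)"
    unfolding rows_def by auto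
  ultimately have "CARD('d) \<le> dim (range (($) A))"
    using dim_image_le rank_UV by (metis row_rank_def)
  then have "span (range (($) A)) = span sym_mats"
    using dim_eq_span[OF sub] dim_sym by simp
  moreover have "subspace (range \<epsilon>)"
    by (rule linear_subspace_image[OF linear_\<epsilon> subspace_UNIV])
  ultimately show ?thesis by (simp add: range_\<epsilon>)
qed

lemma factor_map_right_factor:
  assumes "(A, B) \<in> factorizations"
  shows "column j V \<bullet> blinfun_apply (factor_map B) X = trace_ip (B$j) X"
proof -
  have B: "\<forall>j. B$j \<in> psd_cone" and M: "\<forall>i j. (U ** V)$i$j = trace_ip (A$i) (B$j)"
    using assms by (auto simp: psd_factorizations_def)
  define L where "L X = column j V \<bullet> blinfun_apply (factor_map B) X - trace_ip (B$j) X" for X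
  have "linear L"
    unfolding L_def
    by (rule linearI) (simp_all add: blinfun.add_right blinfun.scaleR_right inner_add_right
        trace_ip_add_right trace_ip_scaleR_right algebra_simps)
  moreover have "L (A$i) = 0" for i
    using M by (simp add: L_def factor_map_left_factor[OF assms] matrix_mult_entry inner_commute
        trace_ip_commute[of "B$_"])
  ultimately have L_sym: "L Y = 0" if "Y \<in> sym_mats" for Y
    using linear_eq_0_on_span[of L "range (($) A)"] span_left_factors[OF assms] that by auto
  have "B$j \<in> sym_mats" using B psd_cone_subset_sym_mats by blast
  then have "L (transpose X) = L X"
    by (simp add: L_def factor_map_transpose[OF B] trace_ip_transpose_right)
  then have "L X = L ((1/2) *\<^sub>R (X + transpose X))"
    using linear_scale[OF \<open>linear L\<close>] linear_add[OF \<open>linear L\<close>] by simp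
  also have "\<dots> = 0"
    by (rule L_sym) (simp add: sym_mats_def transpose_def vec_eq_iff add.commute)
  finally show ?thesis by (simp add: L_def)
qed

lemma factor_map_in_delta_maps:
  assumes "(A, B) \<in> factorizations"
  shows "factor_map B \<in> delta_maps"
proof -
  have A: "\<forall>i. A$i \<in> psd_cone" and B: "\<forall>j. B$j \<in> psd_cone"
    using assms by (auto simp: psd_factorizations_def)
  have "row_cone U \<subseteq> blinfun_apply (factor_map B) ` psd_cone"
  proof
    fix x assume "x \<in> row_cone U"
    then obtain c where c: "\<forall>i. 0 \<le> c i" "x = (\<Sum>i\<in>UNIV. c i *\<^sub>R row i U)"
      by (auto simp: row_cone_def)
    have "blinfun_apply (factor_map B) (\<Sum>i\<in>UNIV. c i *\<^sub>R A$i) = x"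
      by (simp add: blinfun.sum_right blinfun.scaleR_right factor_map_left_factor[OF assms] c(2))
    then show "x \<in> blinfun_apply (factor_map B) ` psd_cone"
      using psd_cone_nonneg_combination[OF A c(1)] by blast
  qed
  moreover have "blinfun_apply (factor_map B) ` psd_cone \<subseteq> col_dual V"
    using B by (auto simp: col_dual_def factor_map_right_factor[OF assms] intro!: trace_ip_psd_nonneg)
  ultimately show ?thesis using factor_map_transpose[OF B] by (simp add: Delta_def)
qed

definition coord_matrix :: "((real^'k^'k) \<Rightarrow>\<^sub>L (real^'d)) \<Rightarrow> real^'d^'d" where
  "coord_matrix \<pi> = matrix (\<lambda>y. blinfun_apply \<pi> (\<epsilon> y))"

lemma linear_coord_map: "linear (\<lambda>y. blinfun_apply \<pi> (\<epsilon> y))"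
  using linear_compose[OF linear_\<epsilon> bounded_linear.linear[OF blinfun.bounded_linear_right]]
  by (simp add: o_def)

lemma coord_matrix_mult: "coord_matrix \<pi> *v y = blinfun_apply \<pi> (\<epsilon> y)"
  unfolding coord_matrix_def
  by (rule matrix_works) (simp add: linear_coord_map linear_matrix_vector_mul_eq)

text \<open>\<open>\<pi>\<close> maps \<open>psd_cone\<close> onto the full-dimensional cone \<open>row_cone U\<close>, so its restriction to
  the \<open>CARD('d)\<close>-dimensional space of symmetric matrices is onto, hence invertible.\<close>
lemma det_coord_matrix_nonzero:
  assumes "\<pi> \<in> delta_maps"
  shows "det (coord_matrix \<pi>) \<noteq> 0"
proof -
  have "rows U \<subseteq> range (\<lambda>y. blinfun_apply \<pi> (\<epsilon> y))"
  proof
    fix x assume "x \<in> rows U"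
    then obtain i where "x = row i U" by (auto simp: rows_def)
    moreover have "row_cone U \<subseteq> blinfun_apply \<pi> ` psd_cone"
      using assms by (simp add: Delta_def)
    ultimately obtain Y where "Y \<in> psd_cone" "x = blinfun_apply \<pi> Y"
      using row_in_row_cone by blast
    moreover obtain y where "Y = \<epsilon> y"
      using \<open>Y \<in> psd_cone\<close> psd_cone_subset_sym_mats range_\<epsilon> by blast
    ultimately show "x \<in> range (\<lambda>y. blinfun_apply \<pi> (\<epsilon> y))" by simp
  qed
  then have "span (rows U) \<subseteq> range (\<lambda>y. blinfun_apply \<pi> (\<epsilon> y))"
    by (intro span_minimal linear_subspace_image[OF linear_coord_map subspace_UNIV])
  then have "surj ((*v) (coord_matrix \<pi>))"
    using span_rows_U by (auto simp: coord_matrix_mult)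
  then obtain B' where "coord_matrix \<pi> ** B' = mat 1"
    using matrix_right_invertible_surjective by blast
  then have "invertible (coord_matrix \<pi>)"
    using matrix_left_right_inverse unfolding invertible_def by blast
  then show ?thesis by (simp add: invertible_det_nz)
qed

lemma coord_solution_eq:
  assumes "\<pi> \<in> delta_maps" and "Y \<in> sym_mats"
  shows "\<epsilon> (cramer_solution (coord_matrix \<pi>) (blinfun_apply \<pi> Y)) = Y"
proof -
  obtain y where y: "Y = \<epsilon> y" using assms(2) range_\<epsilon> by auto
  then have "y = cramer_solution (coord_matrix \<pi>) (blinfun_apply \<pi> Y)"
    using cramer_solution_iff[OF det_coord_matrix_nonzero[OF assms(1)]] coord_matrix_mult by blast
  then show ?thesis using y by simp
qed

definition factor_of_map ::
    "((real^'k^'k) \<Rightarrow>\<^sub>L (real^'d)) \<Rightarrow> ((real^'k^'k)^'p) \<times> ((real^'k^'k)^'q)" where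
  "factor_of_map \<pi> = ((\<chi> i. \<epsilon> (cramer_solution (coord_matrix \<pi>) (row i U))),
                      (\<chi> j. adjoint_matrix \<pi> (column j V)))"

lemma factor_of_map_in_factorizations:
  assumes "\<pi> \<in> delta_maps"
  shows "factor_of_map \<pi> \<in> factorizations"
proof -
  have transp: "\<And>X. blinfun_apply \<pi> (transpose X) = blinfun_apply \<pi> X"
    and P: "row_cone U \<subseteq> blinfun_apply \<pi> ` psd_cone"
    and Q: "blinfun_apply \<pi> ` psd_cone \<subseteq> col_dual V"
    using assms by (auto simp: Delta_def)
  have left: "\<epsilon> (cramer_solution (coord_matrix \<pi>) (row i U)) \<in> psd_cone" for i
  proof -
    obtain Y where "Y \<in> psd_cone" "row i U = blinfun_apply \<pi> Y"
      using P row_in_row_cone by blast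
    then show ?thesis using coord_solution_eq[OF assms] psd_cone_subset_sym_mats by auto
  qed
  have "blinfun_apply \<pi> (\<epsilon> (cramer_solution (coord_matrix \<pi>) (row i U))) = row i U" for i
    using cramer_solution_iff[OF det_coord_matrix_nonzero[OF assms]] coord_matrix_mult by metis
  then have "(U ** V)$i$j = trace_ip (\<epsilon> (cramer_solution (coord_matrix \<pi>) (row i U)))
                                   (adjoint_matrix \<pi> (column j V))" for i j
    by (simp add: trace_ip_commute[of "\<epsilon> _"] trace_ip_adjoint_matrix matrix_mult_entry inner_commute)
  moreover have "adjoint_matrix \<pi> (column j V) \<in> psd_cone" for j
    using Q outer_in_psd_cone by (intro adjoint_matrix_in_psd_cone transp) (auto simp: col_dual_def)
  ultimately show ?thesis using left by (simp add: factor_of_map_def psd_factorizations_def)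
qed

lemma factor_of_map_factor_map:
  assumes "p \<in> factorizations"
  shows "factor_of_map (factor_map (snd p)) = p"
proof -
  obtain A B where p: "p = (A, B)" by fastforce
  have D: "factor_map B \<in> delta_maps"
    using assms factor_map_in_delta_maps by (simp add: p)
  have "\<epsilon> (cramer_solution (coord_matrix (factor_map B)) (row i U)) = A$i" for i
    using coord_solution_eq[OF D, of "A$i"] assms psd_cone_subset_sym_mats
    by (auto simp: p psd_factorizations_def factor_map_left_factor)
  moreover have "adjoint_matrix (factor_map B) (column j V) = B$j" for j
    using assms
    by (simp add: p adjoint_matrix_def vec_eq_iff factor_map_right_factor trace_ip_matrix_unit)
  ultimately show ?thesis by (simp add: p factor_of_map_def vec_eq_iff)
qed

lemma factor_map_factor_of_map: "factor_map (snd (factor_of_map \<pi>)) = \<pi>"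
  by (rule blinfun_eqI)
    (simp add: factor_map_apply factor_of_map_def trace_ip_adjoint_matrix right_inverse_expansion[OF right_inverse])

lemma continuous_on_factor_map: "continuous_on factorizations (\<lambda>p. factor_map (snd p))"
proof -
  have "isCont (\<lambda>p. factor_map (snd p)) p" for p :: "((real^'k^'k)^'p) \<times> ((real^'k^'k)^'q)"
  proof (rule continuous_blinfun_componentwiseI)
    fix i j
    have "continuous_on UNIV (\<lambda>p. blinfun_apply (factor_map (snd p)) j \<bullet> i)"
      unfolding factor_map_apply trace_ip_expand by (intro continuous_intros)
    then show "continuous (at p) (\<lambda>p. blinfun_apply (factor_map (snd p)) j \<bullet> i)"
      using continuous_on_eq_continuous_at[OF open_UNIV] by blast
  qed
  then show ?thesis by (simp add: continuous_at_imp_continuous_on)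
qed

lemma continuous_on_factor_of_map: "continuous_on delta_maps factor_of_map"
proof -
  have apply_cont: "continuous_on T (\<lambda>\<pi>. blinfun_apply \<pi> z)" for T and z :: "real^'k^'k"
    by (rule linear_continuous_on[OF blinfun.bounded_linear_left])
  have coords_cont: "continuous_on delta_maps (\<lambda>\<pi>. cramer_solution (coord_matrix \<pi>) u)" for u
  proof (rule continuous_on_cramer_solution)
    show "continuous_on delta_maps (\<lambda>\<pi>. coord_matrix \<pi> $ r $ c)" for r c
      unfolding coord_matrix_def matrix_def by (simp add: continuous_on_component apply_cont)
  qed (simp_all add: det_coord_matrix_nonzero)
  have \<epsilon>_cont: "continuous_on UNIV \<epsilon>"
    using linear_\<epsilon> by (simp add: linear_continuous_on linear_conv_bounded_linear)
  show ?thesis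
    unfolding factor_of_map_def adjoint_matrix_def
    by (intro continuous_on_Pair continuous_on_vec_lambda continuous_on_inner continuous_on_const
        continuous_on_compose2[OF \<epsilon>_cont coords_cont subset_UNIV] apply_cont)
qed

lemma homeomorphism_factorizations_delta_maps:
  "homeomorphism factorizations delta_maps (\<lambda>p. factor_map (snd p)) factor_of_map"
proof (rule homeomorphismI[OF continuous_on_factor_map continuous_on_factor_of_map])
  show "(\<lambda>p. factor_map (snd p)) ` factorizations \<subseteq> delta_maps"
    using factor_map_in_delta_maps by auto
qed (auto simp: factor_of_map_in_factorizations factor_of_map_factor_map factor_map_factor_of_map)

end

theorem proposition7p3:
  fixes M :: "real^'q^'p" and U :: "real^'d^'p" and V :: "real^'q^'d"
  assumes "\<forall>i j. 0 \<le> M $ i $ j"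
    and "CARD('d) = (CARD('k) + 1) choose 2"
    and "rank M = CARD('d)"
    and "psd_rank M = CARD('k)"
    and "M = U ** V"
  shows "(psd_factorizations M :: (((real^'k^'k)^'p) \<times> ((real^'k^'k)^'q)) set)
           homeomorphic
         (Delta (row_cone U) (col_dual V) :: ((real^'k^'k) \<Rightarrow>\<^sub>L (real^'d)) set)"
proof -
  obtain \<epsilon> :: "real^'d \<Rightarrow> real^'k^'k" where "linear \<epsilon>" "range \<epsilon> = sym_mats"
    using sym_mats_linear_parametrization[OF assms(2)] by blast
  have rank_UV: "rank (U ** V) = CARD('d)" using assms(3,5) by simp
  obtain R :: "real^'d^'q" where "V ** R = mat 1"
    using rank_factors_of_full_rank_product(2)[OF rank_UV] full_rank_surjective
      matrix_right_invertible_surjective by blast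
  interpret psd_factorization_setup U V R \<epsilon>
    by (rule psd_factorization_setup.intro) fact+
  show ?thesis
    unfolding assms(5) homeomorphic_def using homeomorphism_factorizations_delta_maps by blast
qed

end
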